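(* Let $V$ be a $\mathbb{Z}$-graded vertex algebra with $V=C_2(V)$. If a weak $V$-module $M$ is completely reducible, then $M=\widetilde{C}_2(M)$.
   Context: A $\mathbb{Z}$-graded vertex algebra is a vertex algebra $V=\bigoplus_{n\in\mathbb{Z}}V_n$ with a conformal vector $\omega\in V_2$ whose modes $L(n)$ (where $Y(\omega,z)=\sum_nL(n)z^{-n-2}$) satisfy the Virasoro relations, with $L(0)$ acting on $V_n$ as $n$ and $Y(L(-1)v,z)=\frac{d}{dz}Y(v,z)$. Modes: $Y(v,z)=\sum_n v_nz^{-n-1}$. $C_2(V)=\mathrm{Span}_{\mathbb{C}}\{u_{-2}v\mid u,v\in V\}$; for a weak $V$-module $M$, $\widetilde{C}_2(M)=\mathrm{Span}_{\mathbb{C}}\{u_{-2}w\mid u\in V,\ w\in M\}$. A weak $V$-module is completely reducible if it is a direct sum of finitely many irreducible weak $V$-modules (irreducible meaning no weak submodules other than $0$ and itself). *)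

theory Defs
  imports Complex_Main
begin

text \<open>Vector spaces over the complex numbers are given by a scalar multiplication
  s :: complex => 'a => 'a satisfying the axioms of the locale vector_space.
  Modes: Y u n v stands for u_n v, where Y(u,z) = sum_n u_n z^(-n-1).
  The whole type 'v is the vertex algebra V, the whole type 'm is the module M.\<close>

definition int_sign :: "int \<Rightarrow> complex" where
  "int_sign l = (if even l then 1 else -1)"

definition truncated :: "('v \<Rightarrow> int \<Rightarrow> 'm \<Rightarrow> 'm::zero) \<Rightarrow> bool" where
  "truncated YM \<longleftrightarrow> (\<forall>u w. \<exists>N. \<forall>n\<ge>N. YM u n w = 0)"

text \<open>By truncation only finitely many terms are nonzero; we require equality of the
  partial sums up to N for all sufficiently large N.\<close>
definition borcherds ::
  "(complex \<Rightarrow> 'm \<Rightarrow> 'm::ab_group_add) \<Rightarrow> ('v \<Rightarrow> int \<Rightarrow> 'v \<Rightarrow> 'v) \<Rightarrow> ('v \<Rightarrow> int \<Rightarrow> 'm \<Rightarrow> 'm) \<Rightarrow> bool" where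
  "borcherds sM Y YM \<longleftrightarrow>
     (\<forall>u v w l m n. \<exists>N0. \<forall>N\<ge>N0.
        (\<Sum>i<N. sM ((of_int m) gchoose i) (YM (Y u (l + int i) v) (m + n - int i) w)) =
        (\<Sum>i<N. sM ((-1) ^ i * ((of_int l) gchoose i))
            (YM u (l + m - int i) (YM v (n + int i) w)
             - sM (int_sign l) (YM v (l + n - int i) (YM u (m + int i) w)))))"

definition bilinear_modes ::
  "(complex \<Rightarrow> 'v \<Rightarrow> 'v::ab_group_add) \<Rightarrow> (complex \<Rightarrow> 'm \<Rightarrow> 'm::ab_group_add) \<Rightarrow> ('v \<Rightarrow> int \<Rightarrow> 'm \<Rightarrow> 'm) \<Rightarrow> bool" where
  "bilinear_modes sV sM YM \<longleftrightarrow>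
     (\<forall>u n. Vector_Spaces.linear sM sM (YM u n)) \<and>
     (\<forall>n w. Vector_Spaces.linear sV sM (\<lambda>u. YM u n w))"

definition vertex_algebra ::
  "(complex \<Rightarrow> 'v \<Rightarrow> 'v::ab_group_add) \<Rightarrow> ('v \<Rightarrow> int \<Rightarrow> 'v \<Rightarrow> 'v) \<Rightarrow> 'v \<Rightarrow> bool" where
  "vertex_algebra sV Y vac \<longleftrightarrow>
     vector_space sV \<and> bilinear_modes sV sV Y \<and> truncated Y \<and>
     (\<forall>n v. Y vac n v = (if n = -1 then v else 0)) \<and>
     (\<forall>u. Y u (-1) vac = u) \<and> (\<forall>u n. n \<ge> 0 \<longrightarrow> Y u n vac = 0) \<and>
     borcherds sV Y Y"

definition vir_L :: "('v \<Rightarrow> int \<Rightarrow> 'v \<Rightarrow> 'v) \<Rightarrow> 'v \<Rightarrow> int \<Rightarrow> 'v \<Rightarrow> 'v" where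
  "vir_L Y \<omega> n = Y \<omega> (n + 1)"

text \<open>Z-graded vertex algebra: V = direct sum of the subspaces Vg n (n in Z), with a
  conformal vector omega in Vg 2 whose modes L(n) satisfy the Virasoro relations (with some
  central charge c), L(0) acts on Vg n as n, and Y(L(-1)v,z) = d/dz Y(v,z), i.e.
  (L(-1)v)_n = -n v_{n-1}.\<close>
definition Z_graded_VA ::
  "(complex \<Rightarrow> 'v \<Rightarrow> 'v::ab_group_add) \<Rightarrow> ('v \<Rightarrow> int \<Rightarrow> 'v \<Rightarrow> 'v) \<Rightarrow> 'v \<Rightarrow> (int \<Rightarrow> 'v set) \<Rightarrow> 'v \<Rightarrow> bool" where
  "Z_graded_VA sV Y vac Vg \<omega> \<longleftrightarrow>
     vertex_algebra sV Y vac \<and>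
     (\<forall>n. module.subspace sV (Vg n)) \<and>
     (\<forall>v. \<exists>!f::int \<Rightarrow> 'v. finite {n. f n \<noteq> 0} \<and> (\<forall>n. f n \<in> Vg n) \<and> v = sum f {n. f n \<noteq> 0}) \<and>
     \<omega> \<in> Vg 2 \<and>
     (\<exists>c::complex. \<forall>m n v.
        vir_L Y \<omega> m (vir_L Y \<omega> n v) - vir_L Y \<omega> n (vir_L Y \<omega> m v) =
          sV (of_int (m - n)) (vir_L Y \<omega> (m + n) v) +
          (if m + n = 0 then sV ((of_int (m ^ 3 - m) / 12) * c) v else 0)) \<and>
     (\<forall>n. \<forall>v\<in>Vg n. vir_L Y \<omega> 0 v = sV (of_int n) v) \<and>
     (\<forall>v n x. Y (vir_L Y \<omega> (-1) v) n x = sV (- of_int n) (Y v (n - 1) x))"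

definition weak_module ::
  "(complex \<Rightarrow> 'v \<Rightarrow> 'v::ab_group_add) \<Rightarrow> ('v \<Rightarrow> int \<Rightarrow> 'v \<Rightarrow> 'v) \<Rightarrow> 'v \<Rightarrow>
   (complex \<Rightarrow> 'm \<Rightarrow> 'm::ab_group_add) \<Rightarrow> ('v \<Rightarrow> int \<Rightarrow> 'm \<Rightarrow> 'm) \<Rightarrow> bool" where
  "weak_module sV Y vac sM YM \<longleftrightarrow>
     vector_space sM \<and> bilinear_modes sV sM YM \<and> truncated YM \<and>
     (\<forall>n w. YM vac n w = (if n = -1 then w else 0)) \<and>
     borcherds sM Y YM"

definition weak_submodule ::
  "(complex \<Rightarrow> 'm \<Rightarrow> 'm::ab_group_add) \<Rightarrow> ('v \<Rightarrow> int \<Rightarrow> 'm \<Rightarrow> 'm) \<Rightarrow> 'm set \<Rightarrow> bool" where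
  "weak_submodule sM YM W \<longleftrightarrow>
     module.subspace sM W \<and> (\<forall>u n. \<forall>w\<in>W. YM u n w \<in> W)"

definition irreducible_submodule ::
  "(complex \<Rightarrow> 'm \<Rightarrow> 'm::ab_group_add) \<Rightarrow> ('v \<Rightarrow> int \<Rightarrow> 'm \<Rightarrow> 'm) \<Rightarrow> 'm set \<Rightarrow> bool" where
  "irreducible_submodule sM YM W \<longleftrightarrow>
     weak_submodule sM YM W \<and> W \<noteq> {0} \<and>
     (\<forall>U. weak_submodule sM YM U \<and> U \<subseteq> W \<longrightarrow> U = {0} \<or> U = W)"

definition completely_reducible ::
  "(complex \<Rightarrow> 'm \<Rightarrow> 'm::ab_group_add) \<Rightarrow> ('v \<Rightarrow> int \<Rightarrow> 'm \<Rightarrow> 'm) \<Rightarrow> bool" where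
  "completely_reducible sM YM \<longleftrightarrow>
     (\<exists>k::nat. \<exists>W::nat \<Rightarrow> 'm set.
        (\<forall>i<k. irreducible_submodule sM YM (W i)) \<and>
        (\<forall>x. \<exists>!f::nat \<Rightarrow> 'm. (\<forall>i<k. f i \<in> W i) \<and> (\<forall>i\<ge>k. f i = 0) \<and> x = (\<Sum>i<k. f i)))"

definition C2 :: "(complex \<Rightarrow> 'v \<Rightarrow> 'v::ab_group_add) \<Rightarrow> ('v \<Rightarrow> int \<Rightarrow> 'v \<Rightarrow> 'v) \<Rightarrow> 'v set" where
  "C2 sV Y = module.span sV {Y u (-2) v | u v. True}"

definition C2_tilde ::
  "(complex \<Rightarrow> 'm \<Rightarrow> 'm::ab_group_add) \<Rightarrow> ('v \<Rightarrow> int \<Rightarrow> 'm \<Rightarrow> 'm) \<Rightarrow> 'm set" where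
  "C2_tilde sM YM = module.span sM {YM u (-2) w | u w. True}"

end

theory Submission
  imports Defs
begin

(* For any weak module M over any vertex algebra V, the action of
   C_2(V) through the (-1)-st mode lands in C~_2(M):
   (i)  the Borcherds identity with m = 0 expresses (u_l v)_n w as a finite
        combination of terms u_{l-i} v_{n+i} w and v_{l+n-i} u_i w;
   (ii) taking v = 1 and l = -2 gives (u_{-2} 1)_{-k-2} w = (k+2) u_{-k-3} w,
        so by induction every mode u_{-k-2} w with k >= 0 lies in C~_2(M);
   (iii) taking l = -2, n = -1 then shows (a_{-2} b)_{-1} w is in C~_2(M), and
        linearity in the vertex-algebra argument extends this to all of C_2(V).
   If V = C_2(V), the vacuum lies in C_2(V), so w = 1_{-1} w is in C~_2(M). *)

lemma weak_module_vector_space: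
  "weak_module sV Y vac sM YM \<Longrightarrow> vector_space sM"
  unfolding weak_module_def by blast

lemma C2_tilde_subspace:
  assumes "vector_space sM"
  shows "module.subspace sM (C2_tilde sM YM)"
proof -
  interpret M: vector_space sM by fact
  show ?thesis unfolding C2_tilde_def by (rule M.subspace_span)
qed

lemma neg_two_gchoose:
  "(-1) ^ k * ((-2 :: complex) gchoose k) = of_nat (k + 1)"
proof -
  have "(-1) ^ k * ((-2 :: complex) gchoose k) = (of_nat (k + 1) :: complex) gchoose k"
    using gbinomial_minus[of "2::complex" k] by (simp add: add.commute)
  also have "\<dots> = of_nat ((k + 1) choose k)"
    by (rule binomial_gbinomial[symmetric])
  also have "(k + 1) choose k = k + 1"
    using binomial_symmetric[of 1 "k + 1"] by simp
  finally show ?thesis .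
qed

(* Borcherds identity with m = 0: the left-hand side collapses to (u_l v)_n w,
   since binom(0,i) vanishes for i > 0. *)
lemma borcherds_m0:
  assumes "vector_space sM" and "borcherds sM Y YM"
  obtains N0 where "\<And>N. N \<ge> N0 \<Longrightarrow> YM (Y u l v) n w =
    (\<Sum>i<N. sM ((-1) ^ i * ((of_int l) gchoose i))
       (YM u (l - int i) (YM v (n + int i) w)
        - sM (int_sign l) (YM v (l + n - int i) (YM u (int i) w))))"
proof -
  interpret M: vector_space sM by fact
  obtain N0 where B: "\<And>N. N \<ge> N0 \<Longrightarrow>
      (\<Sum>i<N. sM ((of_int 0) gchoose i) (YM (Y u (l + int i) v) (0 + n - int i) w)) =
      (\<Sum>i<N. sM ((-1) ^ i * ((of_int l) gchoose i))
         (YM u (l + 0 - int i) (YM v (n + int i) w)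
          - sM (int_sign l) (YM v (l + n - int i) (YM u (0 + int i) w))))"
    using assms(2)[unfolded borcherds_def, rule_format, where u=u and v=v and w=w and l=l and m=0 and n=n]
    by blast
  have lhs: "(\<Sum>i<N. sM ((of_int 0) gchoose i) (YM (Y u (l + int i) v) (0 + n - int i) w))
      = YM (Y u l v) n w" if "0 < N" for N
  proof -
    have "(\<Sum>i<N. sM ((of_int 0) gchoose i) (YM (Y u (l + int i) v) (0 + n - int i) w))
        = (\<Sum>i\<in>{0}. sM ((of_int 0) gchoose i) (YM (Y u (l + int i) v) (0 + n - int i) w))"
      by (rule sum.mono_neutral_right) (use that in \<open>auto simp: gbinomial_0_left\<close>)
    then show ?thesis by simp
  qed
  show ?thesis
  proof (rule that[of "max N0 1"])
    fix N :: nat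
    assume "max N0 1 \<le> N"
    then show "YM (Y u l v) n w =
      (\<Sum>i<N. sM ((-1) ^ i * ((of_int l) gchoose i))
         (YM u (l - int i) (YM v (n + int i) w)
          - sM (int_sign l) (YM v (l + n - int i) (YM u (int i) w))))"
      using B[of N] lhs[of N] by simp
  qed
qed

(* Step (ii): every mode u_{-k-2} w lies in C~_2(M).  The vacuum case of the
   Borcherds identity gives (u_{-2} 1)_{-k-2} w = (k+2) u_{-k-3} w. *)
lemma deep_modes_in_C2_tilde:
  assumes wm: "weak_module sV Y vac sM YM"
  shows "YM u (- int (k + 2)) w \<in> C2_tilde sM YM"
proof (induction k arbitrary: u)
  case 0
  interpret M: vector_space sM using wm by (rule weak_module_vector_space)
  show ?case unfolding C2_tilde_def by (rule M.span_base) force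
next
  case (Suc k)
  interpret M: vector_space sM using wm by (rule weak_module_vector_space)
  have borcherds: "borcherds sM Y YM"
    using wm unfolding weak_module_def by blast
  have vac_modes: "\<And>n w. YM vac n w = (if n = -1 then w else 0)"
    using wm unfolding weak_module_def by blast
  have zero: "YM x n 0 = 0" for x n
  proof -
    interpret L: Vector_Spaces.linear sM sM "YM x n"
      using wm unfolding weak_module_def bilinear_modes_def by blast
    show ?thesis by (rule L.zero)
  qed
  obtain N0 where B: "\<And>N. N \<ge> N0 \<Longrightarrow> YM (Y u (-2) vac) (- int (k + 2)) w =
    (\<Sum>i<N. sM ((-1) ^ i * ((of_int (-2)) gchoose i))
       (YM u (-2 - int i) (YM vac (- int (k + 2) + int i) w)
        - sM (int_sign (-2)) (YM vac (-2 + - int (k + 2) - int i) (YM u (int i) w))))"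
    using borcherds_m0[OF M.vector_space_axioms borcherds, where u=u and l="-2" and v=vac
        and n="- int (k + 2)" and w=w] by blast
  define N where "N = max N0 (k + 2)"
  (* only the term i = k+1 survives: there the vacuum mode is the identity *)
  have "(\<Sum>i<N. sM ((-1) ^ i * ((of_int (-2)) gchoose i))
       (YM u (-2 - int i) (YM vac (- int (k + 2) + int i) w)
        - sM (int_sign (-2)) (YM vac (-2 + - int (k + 2) - int i) (YM u (int i) w))))
    = (\<Sum>i\<in>{k + 1}. sM ((-1) ^ i * ((of_int (-2)) gchoose i))
       (YM u (-2 - int i) (YM vac (- int (k + 2) + int i) w)
        - sM (int_sign (-2)) (YM vac (-2 + - int (k + 2) - int i) (YM u (int i) w))))"
    by (rule sum.mono_neutral_right) (auto simp: N_def vac_modes zero)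
  also have "\<dots> = sM (of_nat (k + 2)) (YM u (- int (Suc k + 2)) w)"
    using neg_two_gchoose[of "k + 1"] by (simp add: vac_modes algebra_simps)
  finally have rec: "YM (Y u (-2) vac) (- int (k + 2)) w
      = sM (of_nat (k + 2)) (YM u (- int (Suc k + 2)) w)"
    using B[of N] by (simp add: N_def)
  have "sM (inverse (of_nat (k + 2))) (sM (of_nat (k + 2)) (YM u (- int (Suc k + 2)) w))
      \<in> C2_tilde sM YM"
    unfolding C2_tilde_def
    by (rule M.span_scale) (use Suc.IH[of "Y u (-2) vac"] rec in \<open>simp add: C2_tilde_def\<close>)
  moreover have "(of_nat (k + 2) :: complex) \<noteq> 0"
    by (simp only: of_nat_eq_0_iff)
  ultimately show ?case by simp
qed

(* Step (iii) on generators: (a_{-2} b)_{-1} w lies in C~_2(M), because every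
   term of the m = 0 Borcherds identity with l = -2 is a mode of index <= -2. *)
lemma C2_generator_action:
  assumes wm: "weak_module sV Y vac sM YM"
  shows "YM (Y a (-2) b) (-1) w \<in> C2_tilde sM YM"
proof -
  interpret M: vector_space sM using wm by (rule weak_module_vector_space)
  have borcherds: "borcherds sM Y YM"
    using wm unfolding weak_module_def by blast
  obtain N0 where B: "\<And>N. N \<ge> N0 \<Longrightarrow> YM (Y a (-2) b) (-1) w =
    (\<Sum>i<N. sM ((-1) ^ i * ((of_int (-2)) gchoose i))
       (YM a (-2 - int i) (YM b (-1 + int i) w)
        - sM (int_sign (-2)) (YM b (-2 + -1 - int i) (YM a (int i) w))))"
    using borcherds_m0[OF M.vector_space_axioms borcherds, where u=a and l="-2" and v=b
        and n="-1" and w=w] by blast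
  have a_term: "YM a (-2 - int i) x \<in> C2_tilde sM YM" for i x
  proof -
    have "-2 - int i = - int (i + 2)" by simp
    then show ?thesis using deep_modes_in_C2_tilde[OF wm, of a i x] by simp
  qed
  have b_term: "YM b (-2 + -1 - int i) x \<in> C2_tilde sM YM" for i x
  proof -
    have "-2 + -1 - int i = - int (i + 1 + 2)" by simp
    then show ?thesis using deep_modes_in_C2_tilde[OF wm, of b "i + 1" x] by simp
  qed
  show ?thesis
    unfolding B[OF order_refl] C2_tilde_def
    by (intro M.span_sum M.span_scale M.span_diff
        a_term[unfolded C2_tilde_def] b_term[unfolded C2_tilde_def])
qed

lemma C2_action_in_C2_tilde:
  assumes wm: "weak_module sV Y vac sM YM" and x: "x \<in> C2 sV Y"
  shows "YM x (-1) w \<in> C2_tilde sM YM"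
proof -
  interpret M: vector_space sM using wm by (rule weak_module_vector_space)
  interpret L: Vector_Spaces.linear sV sM "\<lambda>u. YM u (-1) w"
    using wm unfolding weak_module_def bilinear_modes_def by blast
  let ?G = "{Y u (-2) v | u v. True}"
  have "YM x (-1) w \<in> M.span ((\<lambda>u. YM u (-1) w) ` ?G)"
    using x L.span_image unfolding C2_def by blast
  also have "\<dots> \<subseteq> C2_tilde sM YM"
    using C2_generator_action[OF wm]
    by (intro M.span_minimal C2_tilde_subspace[OF M.vector_space_axioms]) blast
  finally show ?thesis .
qed

theorem corollary2p14:
  fixes sV :: "complex \<Rightarrow> 'v::ab_group_add \<Rightarrow> 'v"
    and Y :: "'v \<Rightarrow> int \<Rightarrow> 'v \<Rightarrow> 'v"
    and vac :: 'v and \<omega> :: 'v and Vg :: "int \<Rightarrow> 'v set"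
    and sM :: "complex \<Rightarrow> 'm::ab_group_add \<Rightarrow> 'm"
    and YM :: "'v \<Rightarrow> int \<Rightarrow> 'm \<Rightarrow> 'm"
  assumes "Z_graded_VA sV Y vac Vg \<omega>"
    and "C2 sV Y = UNIV"
    and "weak_module sV Y vac sM YM"
    and "completely_reducible sM YM"
  shows "C2_tilde sM YM = UNIV"
proof -
  have "w \<in> C2_tilde sM YM" for w
  proof -
    have "YM vac (-1) w = w"
      using assms(3) unfolding weak_module_def by simp
    then show ?thesis
      using C2_action_in_C2_tilde[OF assms(3), of vac w] assms(2) by simp
  qed
  then show ?thesis by blast
qed

end
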